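(* Let $G$ be a finite connected graph in which no edge joins two vertices that both have degree at least $3$, and let $K>0$. Then every stable fixed point $\theta$ of the Kuramoto model on $G$ (as in the context) satisfies $\Delta_{ij}\in[-\pi/2,\pi/2]$ for every edge $\langle ij\rangle$ of $G$.
   Context: The Kuramoto model on $G$ with vertices $1,\dots,n$ is $\dot\theta_i=-K\sum_{j\sim i}\sin(\theta_i-\theta_j)$, where $j\sim i$ means $j$ is adjacent to $i$. A fixed point is $\theta\in\mathbb{R}^n$ with $\sum_{j\sim i}\sin(\theta_i-\theta_j)=0$ for all $i$. For adjacent $i,j$, $\Delta_{ij}$ is $\theta_i-\theta_j$ reduced modulo $2\pi$ into $(-\pi,\pi]$. The stability matrix $M$ has entries $M_{ij}=K\cos(\theta_i-\theta_j)$ if $i\sim j$, $M_{ii}=-\sum_{k\sim i}K\cos(\theta_i-\theta_k)$, and $0$ otherwise; a fixed point is stable if $M$ is negative semidefinite. *)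

theory Defs
  imports "HOL-Analysis.Analysis"
begin

definition simple_graph :: "nat \<Rightarrow> (nat \<Rightarrow> nat \<Rightarrow> bool) \<Rightarrow> bool" where
  "simple_graph n E \<longleftrightarrow>
     (\<forall>i j. E i j \<longrightarrow> i < n \<and> j < n) \<and>
     (\<forall>i j. E i j \<longrightarrow> E j i) \<and> (\<forall>i. \<not> E i i)"

definition graph_connected :: "nat \<Rightarrow> (nat \<Rightarrow> nat \<Rightarrow> bool) \<Rightarrow> bool" where
  "graph_connected n E \<longleftrightarrow> (\<forall>i<n. \<forall>j<n. E\<^sup>*\<^sup>* i j)"

definition degree :: "nat \<Rightarrow> (nat \<Rightarrow> nat \<Rightarrow> bool) \<Rightarrow> nat \<Rightarrow> nat" where
  "degree n E i = card {j. j < n \<and> E i j}"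

definition kuramoto_fixed_point :: "nat \<Rightarrow> (nat \<Rightarrow> nat \<Rightarrow> bool) \<Rightarrow> (nat \<Rightarrow> real) \<Rightarrow> bool" where
  "kuramoto_fixed_point n E \<theta> \<longleftrightarrow>
     (\<forall>i<n. (\<Sum>j\<in>{j. j < n \<and> E i j}. sin (\<theta> i - \<theta> j)) = 0)"

definition stab_matrix :: "nat \<Rightarrow> (nat \<Rightarrow> nat \<Rightarrow> bool) \<Rightarrow> real \<Rightarrow> (nat \<Rightarrow> real) \<Rightarrow> nat \<Rightarrow> nat \<Rightarrow> real" where
  "stab_matrix n E K \<theta> i j =
     (if i = j then - (\<Sum>k\<in>{k. k < n \<and> E i k}. K * cos (\<theta> i - \<theta> k))
      else if E i j then K * cos (\<theta> i - \<theta> j) else 0)"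

definition neg_semidef :: "nat \<Rightarrow> (nat \<Rightarrow> nat \<Rightarrow> real) \<Rightarrow> bool" where
  "neg_semidef n M \<longleftrightarrow> (\<forall>x :: nat \<Rightarrow> real. (\<Sum>i<n. \<Sum>j<n. x i * M i j * x j) \<le> 0)"

definition kuramoto_stable :: "nat \<Rightarrow> (nat \<Rightarrow> nat \<Rightarrow> bool) \<Rightarrow> real \<Rightarrow> (nat \<Rightarrow> real) \<Rightarrow> bool" where
  "kuramoto_stable n E K \<theta> \<longleftrightarrow> neg_semidef n (stab_matrix n E K \<theta>)"

definition wrap_angle :: "real \<Rightarrow> real" where
  "wrap_angle x = x - 2 * pi * of_int \<lceil>(x - pi) / (2 * pi)\<rceil>"

lemma wrap_angle_range: "- pi < wrap_angle x \<and> wrap_angle x \<le> pi"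
proof -
  define c where "c = \<lceil>(x - pi) / (2 * pi)\<rceil>"
  have "(x - pi) / (2*pi) \<le> c" "c < (x - pi) / (2*pi) + 1" unfolding c_def by linarith+
  then have "x - pi \<le> 2*pi*c" "2*pi*c < x + pi" using pi_gt_zero by (simp_all add: field_simps)
  then show ?thesis unfolding wrap_angle_def c_def[symmetric] by linarith
qed

end

theory Submission
  imports Defs
begin

text \<open>
  Suppose the edge \<open>ij\<close> had \<open>cos (\<theta>\<^sub>i - \<theta>\<^sub>j) < 0\<close>, and let \<open>i\<close> be an endpoint of
  degree at most 2.  The fixed-point equation at \<open>i\<close> has at most two sines, which must then
  cancel, so the cosines at \<open>i\<close> are equal or opposite and their sum is \<open>\<le> 0\<close>; hence
  \<open>M\<^sub>i\<^sub>i \<ge> 0\<close>.  In a negative semidefinite matrix a nonnegative diagonal entry forces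
  \<open>M\<^sub>i\<^sub>j + M\<^sub>j\<^sub>i = 0\<close>, whereas here \<open>M\<^sub>i\<^sub>j = M\<^sub>j\<^sub>i = K cos (\<theta>\<^sub>i - \<theta>\<^sub>j) < 0\<close>.
  Finally \<open>cos \<Delta>\<^sub>i\<^sub>j = cos (\<theta>\<^sub>i - \<theta>\<^sub>j) \<ge> 0\<close> with \<open>\<Delta>\<^sub>i\<^sub>j \<in> (-\<pi>, \<pi>]\<close> gives \<open>|\<Delta>\<^sub>i\<^sub>j| \<le> \<pi>/2\<close>.
\<close>

lemma cos_wrap_angle: "cos (wrap_angle x) = cos x"
proof -
  have "cos (x - of_int m * (2 * pi)) = cos x" for m :: int
    by (metis cos_diff cos_int_2pin sin_int_2pin mult.commute mult_zero_right add_0_right mult_1_right)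
  then show ?thesis
    unfolding wrap_angle_def by (metis mult.commute mult.assoc)
qed

lemma wrap_angle_in_half_circle:
  assumes "cos x \<ge> 0"
  shows "wrap_angle x \<in> {- pi / 2 .. pi / 2}"
proof -
  let ?w = "wrap_angle x"
  have range: "- pi < ?w" "?w \<le> pi"
    using wrap_angle_range by auto
  have cos_w: "cos ?w \<ge> 0"
    using assms by (simp add: cos_wrap_angle)
  have "?w \<le> pi / 2"
  proof (rule ccontr)
    assume "\<not> ?w \<le> pi / 2"
    then have "cos ?w < 0"
      using range by (intro cos_lt_zero_pi) auto
    with cos_w show False by simp
  qed
  moreover have "- (pi / 2) \<le> ?w"
  proof (rule ccontr)
    assume "\<not> - (pi / 2) \<le> ?w"
    then have "cos (- ?w) < 0"
      using range by (intro cos_lt_zero_pi) auto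
    with cos_w show False by simp
  qed
  ultimately show ?thesis by auto
qed

lemma cos_eq_or_opposite_if_sin_cancel:
  fixes a b :: real
  assumes "sin a + sin b = 0"
  shows "cos b = cos a \<or> cos b = - cos a"
proof -
  have "(sin b)\<^sup>2 = (sin a)\<^sup>2"
    using assms by (metis add_eq_0_iff2 power2_minus)
  then have "(cos b)\<^sup>2 = (cos a)\<^sup>2"
    by (simp add: cos_squared_eq)
  then show ?thesis
    by (metis power2_eq_iff)
qed

lemma cos_sum_nonpos_if_sin_sum_zero_card_le_2:
  fixes f :: "'a \<Rightarrow> real"
  assumes "finite S" "card S \<le> 2" "j \<in> S"
    and "cos (f j) < 0"
    and "(\<Sum>k\<in>S. sin (f k)) = 0"
  shows "(\<Sum>k\<in>S. cos (f k)) \<le> 0"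
proof -
  have "card S \<noteq> 0"
    using assms(1,3) by auto
  then consider "card S = 1" | "card S = 2"
    using assms(2) by linarith
  then show ?thesis
  proof cases
    case 1
    then have "S = {j}"
      using assms(3) by (metis card_1_singletonE singletonD)
    then show ?thesis
      using assms(4) by auto
  next
    case 2
    then obtain k where S: "S = {j, k}" "k \<noteq> j"
      using assms(3) by (metis card_2_iff insert_commute insert_iff singletonD)
    then have "sin (f j) + sin (f k) = 0"
      using assms(5) by simp
    then have "cos (f k) = cos (f j) \<or> cos (f k) = - cos (f j)"
      by (rule cos_eq_or_opposite_if_sin_cancel)
    then show ?thesis
      using S assms(4) by auto
  qed
qed

lemma quadratic_form_two_point:
  fixes M :: "nat \<Rightarrow> nat \<Rightarrow> real" and t :: real
  assumes "i < n" "j < n" "i \<noteq> j"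
  defines "x \<equiv> \<lambda>l. if l = i then 1 else if l = j then t else 0"
  shows "(\<Sum>l<n. \<Sum>m<n. x l * M l m * x m) = M i i + t * (M i j + M j i) + t\<^sup>2 * M j j"
proof -
  have pick: "(\<Sum>l<n. x l * g l) = g i + t * g j" for g :: "nat \<Rightarrow> real"
  proof -
    have "(\<Sum>l<n. x l * g l) = (\<Sum>l<n. (if l = i then g i else 0) + (if l = j then t * g j else 0))"
      using assms(3) unfolding x_def by (intro sum.cong) auto
    also have "\<dots> = g i + t * g j"
      using assms(1,2) by (simp add: sum.distrib)
    finally show ?thesis .
  qed
  have "(\<Sum>l<n. \<Sum>m<n. x l * M l m * x m) = (\<Sum>l<n. x l * (\<Sum>m<n. x m * M l m))"
    by (simp add: sum_distrib_left mult.commute mult.left_commute)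
  also have "\<dots> = (M i i + t * M i j) + t * (M j i + t * M j j)"
    by (simp add: pick)
  finally show ?thesis
    by (simp add: algebra_simps power2_eq_square)
qed

lemma neg_semidef_off_diagonal_cancel:
  assumes nsd: "neg_semidef n M"
    and "i < n" "j < n" "i \<noteq> j"
    and diag: "M i i \<ge> 0"
  shows "M i j + M j i = 0"
proof (rule ccontr)
  define b where "b = M i j + M j i"
  define d where "d = M j j"
  define s where "s = 1 / (1 + \<bar>d\<bar>)"
  assume "M i j + M j i \<noteq> 0"
  then have b2: "b\<^sup>2 > 0"
    unfolding b_def by simp
  have s: "s > 0"
    unfolding s_def by (simp add: add_pos_nonneg)
  have "s * \<bar>d\<bar> < 1"
    unfolding s_def by (simp add: field_simps)
  moreover have "- (s * \<bar>d\<bar>) \<le> s * d"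
    using mult_left_mono[of "- \<bar>d\<bar>" d s] s by simp
  ultimately have "1 + s * d > 0"
    by linarith
  have "M i i + (s * b) * b + (s * b)\<^sup>2 * d \<le> 0"
    using nsd[unfolded neg_semidef_def, rule_format,
        of "\<lambda>l. if l = i then 1 else if l = j then s * b else 0"]
    unfolding quadratic_form_two_point[OF assms(2-4)] b_def d_def .
  moreover have "M i i + (s * b) * b + (s * b)\<^sup>2 * d = M i i + s * b\<^sup>2 * (1 + s * d)"
    by (simp add: algebra_simps power2_eq_square)
  moreover have "s * b\<^sup>2 * (1 + s * d) > 0"
    using s b2 \<open>1 + s * d > 0\<close> by simp
  ultimately show False
    using diag by linarith
qed

lemma stable_fixed_point_cos_nonneg_at_low_degree:
  assumes graph: "simple_graph n E"
    and K: "K > 0"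
    and fixed: "kuramoto_fixed_point n E \<theta>"
    and stable: "kuramoto_stable n E K \<theta>"
    and edge: "E i j"
    and deg: "degree n E i \<le> 2"
  shows "cos (\<theta> i - \<theta> j) \<ge> 0"
proof (rule ccontr)
  assume "\<not> cos (\<theta> i - \<theta> j) \<ge> 0"
  then have neg: "cos (\<theta> i - \<theta> j) < 0"
    by simp
  define M where "M = stab_matrix n E K \<theta>"
  define S where "S = {k. k < n \<and> E i k}"
  have ij: "i < n" "j < n" "i \<noteq> j" and edge': "E j i"
    using graph edge unfolding simple_graph_def by metis+
  have "(\<Sum>k\<in>S. cos (\<theta> i - \<theta> k)) \<le> 0"
  proof (rule cos_sum_nonpos_if_sin_sum_zero_card_le_2)
    show "finite S" "card S \<le> 2" "j \<in> S"
      using deg ij edge unfolding S_def degree_def by auto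
    show "(\<Sum>k\<in>S. sin (\<theta> i - \<theta> k)) = 0"
      using fixed ij unfolding kuramoto_fixed_point_def S_def by auto
  qed (fact neg)
  then have "M i i \<ge> 0"
    using K unfolding M_def stab_matrix_def S_def
    by (simp add: mult_nonneg_nonpos flip: sum_distrib_left)
  then have "M i j + M j i = 0"
    using neg_semidef_off_diagonal_cancel[OF _ ij] stable
    unfolding kuramoto_stable_def M_def by blast
  moreover have "cos (\<theta> j - \<theta> i) = cos (\<theta> i - \<theta> j)"
    by (metis cos_minus minus_diff_eq)
  then have "M i j + M j i = 2 * K * cos (\<theta> i - \<theta> j)"
    using ij edge edge' unfolding M_def stab_matrix_def by simp
  ultimately show False
    using K neg by simp
qed

theorem lemma2:
  fixes n :: nat and E :: "nat \<Rightarrow> nat \<Rightarrow> bool" and K :: real and \<theta> :: "nat \<Rightarrow> real"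
  assumes "simple_graph n E"
    and "graph_connected n E"
    and "\<forall>i j. E i j \<longrightarrow> \<not> (degree n E i \<ge> 3 \<and> degree n E j \<ge> 3)"
    and "K > 0"
    and "kuramoto_fixed_point n E \<theta>"
    and "kuramoto_stable n E K \<theta>"
  shows "\<forall>i j. E i j \<longrightarrow> wrap_angle (\<theta> i - \<theta> j) \<in> {- pi / 2 .. pi / 2}"
proof (intro allI impI)
  fix i j
  assume edge: "E i j"
  then have edge': "E j i"
    using assms(1) unfolding simple_graph_def by blast
  note low_degree = stable_fixed_point_cos_nonneg_at_low_degree[OF assms(1,4,5,6)]
  have "degree n E i \<le> 2 \<or> degree n E j \<le> 2"
    using assms(3) edge by fastforce
  then have "cos (\<theta> i - \<theta> j) \<ge> 0"
    using low_degree[OF edge] low_degree[OF edge'] by (metis cos_minus minus_diff_eq)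
  then show "wrap_angle (\<theta> i - \<theta> j) \<in> {- pi / 2 .. pi / 2}"
    by (rule wrap_angle_in_half_circle)
qed

end
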